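(* Assume that $\boldsymbol{\chi}$ has Property NIO. Then there exists an $\ell$-adic character $\chi_0$, possibly over a finite extension $\mathbf{F}_{q^{\nu}}$ of $\mathbf{F}_q$, such that the tuple $\chi_0\boldsymbol{\chi}=(\chi_0\chi_1,\ldots,\chi_0\chi_k)$ has Property CGM over $\mathbf{F}_{q^{\nu}}$.
   Context: Let $\boldsymbol{\chi}=(\chi_1,\ldots,\chi_k)$, $k\geq2$, be a tuple of $\ell$-adic characters of $\mathbf{F}_q^\times$ (characters of a finite field $\mathbf{F}_{q^\nu}$ are composed with the norm when viewed over extensions), and $\Lambda=\chi_1\cdots\chi_k$. The tuple is Kummer-induced if there is a divisor $d\neq1$ of $k$ and characters $\xi_1,\ldots,\xi_{k/d}$ such that the $\chi_i$ are exactly (with multiplicity) all characters $\chi$ with $\chi^d=\xi_j$ for some $j$. It is self-dual if there is a character $\xi$ (dualizing character) such that the multiset of the $\chi_i$ is stable under $\chi\mapsto\xi\chi^{-1}$; a self-dual tuple is alternating if $k$ is even and $\Lambda=\xi^{k/2}$, symmetric otherwise. Property NIO: not Kummer-induced and, if $k$ is even, not self-dual symmetric. Property CGM: not Kummer-induced, $\chi_1\cdots\chi_k=1$, and either $k$ is odd, or the tuple is not self-dual, or $k$ is even, the tuple is self-dual alternating and the dualizing character $\xi$ is trivial. *)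

theory Defs
  imports Main "HOL-Library.Multiset" "HOL-Computational_Algebra.Primes"
begin

text \<open>Fix compatible generators g_nu of the cyclic
groups F_(q^nu)^* (with Norm(g_nu) = g_1) and compatible primitive roots of unity.
A character of F_(q^nu)^* is then encoded by its exponent a in {0..<n}, n = q^nu - 1
(chi(g_nu) = zeta_n^a).  Products of characters are sums mod n, inverses are negation
mod n, the trivial character is 0, and composing a character of F_q^* with the norm
corresponds to multiplication by (q^nu - 1) div (q - 1).\<close>

definition prime_power :: "nat \<Rightarrow> bool" where
  "prime_power q \<longleftrightarrow> (\<exists>p e. prime p \<and> e > 0 \<and> q = p ^ e)"

definition valid_tuple :: "nat \<Rightarrow> nat list \<Rightarrow> bool" where
  "valid_tuple n cs \<longleftrightarrow> (\<forall>c\<in>set cs. c < n)"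

definition kummer_induced :: "nat \<Rightarrow> nat list \<Rightarrow> bool" where
  "kummer_induced n cs \<longleftrightarrow>
    (\<exists>d xis. d dvd length cs \<and> d \<noteq> 1 \<and> length xis = length cs div d \<and>
       (\<forall>xi\<in>set xis. xi < n) \<and>
       mset cs = sum_list (map (\<lambda>xi. mset_set {x. x < n \<and> (d * x) mod n = xi}) xis))"

definition dualizing :: "nat \<Rightarrow> nat list \<Rightarrow> nat \<Rightarrow> bool" where
  "dualizing n cs xi \<longleftrightarrow> xi < n \<and>
     image_mset (\<lambda>c. (xi + n - c) mod n) (mset cs) = mset cs"

definition self_dual :: "nat \<Rightarrow> nat list \<Rightarrow> bool" where
  "self_dual n cs \<longleftrightarrow> (\<exists>xi. dualizing n cs xi)"

definition Lam :: "nat \<Rightarrow> nat list \<Rightarrow> nat" where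
  "Lam n cs = sum_list cs mod n"

definition alternating_wrt :: "nat \<Rightarrow> nat list \<Rightarrow> nat \<Rightarrow> bool" where
  "alternating_wrt n cs xi \<longleftrightarrow> dualizing n cs xi \<and> even (length cs) \<and>
     Lam n cs = (length cs div 2 * xi) mod n"

definition self_dual_symmetric :: "nat \<Rightarrow> nat list \<Rightarrow> bool" where
  "self_dual_symmetric n cs \<longleftrightarrow>
     (\<exists>xi. dualizing n cs xi \<and> \<not> (even (length cs) \<and> Lam n cs = (length cs div 2 * xi) mod n))"

definition NIO :: "nat \<Rightarrow> nat list \<Rightarrow> bool" where
  "NIO n cs \<longleftrightarrow> \<not> kummer_induced n cs \<and> (even (length cs) \<longrightarrow> \<not> self_dual_symmetric n cs)"

definition CGM :: "nat \<Rightarrow> nat list \<Rightarrow> bool" where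
  "CGM n cs \<longleftrightarrow> \<not> kummer_induced n cs \<and> Lam n cs = 0 \<and>
     (odd (length cs) \<or> \<not> self_dual n cs \<or> (even (length cs) \<and> alternating_wrt n cs 0))"

definition twist_lift :: "nat \<Rightarrow> nat \<Rightarrow> nat \<Rightarrow> nat list \<Rightarrow> nat list" where
  "twist_lift q \<nu> c0 cs =
     map (\<lambda>c. (c0 + c * ((q ^ \<nu> - 1) div (q - 1))) mod (q ^ \<nu> - 1)) cs"

end

theory Submission
  imports Defs "HOL-Number_Theory.Number_Theory"
begin

text \<open>
Over \<open>F_(q^\<nu>)\<close> a character \<open>c\<close> of \<open>F_q^*\<close> composed with the norm becomes
\<open>c * m\<close>, where \<open>m = (q^\<nu> - 1) / (q - 1)\<close>, and twisting by \<open>\<chi>\<^sub>0 = c0\<close> gives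
\<open>c0 + c * m\<close>. This lift is injective on characters modulo \<open>q - 1\<close>, and a Kummer fibre
or a dual pair inside its image already comes from one modulo \<open>q - 1\<close>; so the twisted tuple
is Kummer-induced, resp. self-dual, only if the original one is. Twisting multiplies \<open>\<Lambda>\<close>
by \<open>\<chi>\<^sub>0^k\<close> and the dualizing character by \<open>\<chi>\<^sub>0^2\<close>, so one needs
\<open>k c0 + m \<Sum> c\<^sub>i \<equiv> 0\<close>, resp. \<open>2 c0 + m \<xi> \<equiv> 0\<close>, modulo \<open>q^\<nu> - 1\<close>; in the
alternating case the second congruence also forces the first. Both are solvable once
\<open>gcd (2k) (q^\<nu> - 1)\<close> divides \<open>m\<close>, which holds for \<open>\<nu> = \<phi>(K (q - 1))\<close> with \<open>K\<close>
the prime-to-\<open>p\<close> part of \<open>2k\<close>.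
\<close>

lemma cong_mult_right_modulus_iff:
  fixes a b m n :: nat
  assumes "0 < m"
  shows "[a * m = b * m] (mod n * m) \<longleftrightarrow> [a = b] (mod n)"
  using assms by (simp add: cong_def mod_mult_mult2)

lemma exists_linear_cong_solution:
  fixes a b N :: nat
  assumes "0 < N" and "gcd a N dvd b"
  shows "\<exists>x<N. [a * x + b = 0] (mod N)"
proof -
  from assms(2) have "gcd a N dvd b * (N - 1)" by simp
  then obtain x where "[a * x = b * (N - 1)] (mod N)"
    using cong_solve_dvd_nat by blast
  then have "[a * x + b = b * (N - 1) + b] (mod N)"
    by (simp add: cong_add_rcancel_nat)
  moreover have "b * (N - 1) + b = b * N"
    using assms(1) by (cases N) (simp_all add: algebra_simps)
  ultimately have "[a * x + b = 0] (mod N)"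
    by (simp add: cong_def)
  moreover have "[a * (x mod N) + b = a * x + b] (mod N)"
    unfolding cong_def by (metis mod_add_left_eq mod_mult_right_eq)
  ultimately have "[a * (x mod N) + b = 0] (mod N)"
    by (rule cong_trans[rotated])
  then show ?thesis
    using assms(1) by (intro exI[of _ "x mod N"]) simp
qed

lemma card_mult_mod_eq_le:
  fixes d N r :: nat
  assumes "0 < d"
  shows "card {x. x < N \<and> d * x mod N = r} \<le> d"
proof -
  let ?R = "{x. x < N \<and> d * x mod N = r}"
  have "inj_on (\<lambda>x. d * x div N) ?R"
  proof (rule inj_onI)
    fix x y
    assume "x \<in> ?R" "y \<in> ?R" "d * x div N = d * y div N"
    then have "d * x = d * y"
      by (metis (mono_tags) div_mult_mod_eq mem_Collect_eq)
    then show "x = y"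
      using assms by simp
  qed
  moreover have "(\<lambda>x. d * x div N) ` ?R \<subseteq> {..<d}"
    using assms by (auto simp: div_less_iff_less_mult mult.commute)
  ultimately have "card ?R \<le> card {..<d}"
    by (intro card_inj_on_le) auto
  then show ?thesis
    by simp
qed

lemma sum_list_map_eq_bound_imp_eq:
  fixes h :: "'a \<Rightarrow> nat"
  assumes "\<And>y. y \<in> set xs \<Longrightarrow> h y \<le> d"
    and "sum_list (map h xs) = length xs * d"
    and "x \<in> set xs"
  shows "h x = d"
proof -
  have "sum_list (map h (remove1 x xs)) \<le> sum_list (map (\<lambda>_. d) (remove1 x xs))"
    using assms(1) by (intro sum_list_mono) (meson notin_set_remove1)
  also have "\<dots> = (length xs - 1) * d"
    using assms(3) by (simp add: sum_list_triv length_remove1)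
  finally have "length xs * d \<le> h x + (length xs - 1) * d"
    using assms(2,3) sum_list_map_remove1[OF assms(3), of h] by simp
  moreover have "length xs * d = d + (length xs - 1) * d"
    using assms(3) by (cases xs) auto
  ultimately show ?thesis
    using assms(1)[OF assms(3)] by linarith
qed

lemma image_mset_inj_on_eqD:
  assumes "image_mset f M = image_mset f M'" and "inj_on f (set_mset M \<union> set_mset M')"
  shows "M = M'"
  using image_mset_eq_image_mset_plusD[of f M M' "{#}"] assms by auto

lemma size_sum_list_mset: "size (sum_list Ms) = sum_list (map size (Ms :: 'a multiset list))"
  by (induction Ms) auto

lemma image_mset_sum_list: "image_mset f (sum_list Ms) = sum_list (map (image_mset f) Ms)"
  by (induction Ms) auto

definition twist_char :: "nat \<Rightarrow> nat \<Rightarrow> nat \<Rightarrow> nat \<Rightarrow> nat" where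
  "twist_char n m c0 c = (c0 + c * m) mod (n * m)"

lemma twist_lift_eq_map_twist_char:
  assumes "1 < q" and "q ^ \<nu> - 1 = (q - 1) * m"
  shows "twist_lift q \<nu> c0 cs = map (twist_char (q - 1) m c0) cs"
  using assms by (simp add: twist_lift_def twist_char_def)

lemma twist_char_less:
  "0 < n \<Longrightarrow> 0 < m \<Longrightarrow> twist_char n m c0 c < n * m"
  by (simp add: twist_char_def)

lemma cong_twist_char: "[twist_char n m c0 c = c0 + c * m] (mod n * m)"
  by (simp add: twist_char_def cong_def)

lemma twist_char_eq_iff:
  "0 < m \<Longrightarrow> twist_char n m c0 a = twist_char n m c0 b \<longleftrightarrow> [a = b] (mod n)"
  by (simp add: twist_char_def flip: cong_def add: cong_add_lcancel_nat cong_mult_right_modulus_iff)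

lemma inj_on_twist_char: "0 < m \<Longrightarrow> inj_on (twist_char n m c0) {..<n}"
  by (auto intro: inj_onI simp: twist_char_eq_iff cong_def)

lemma mult_twist_char_mod:
  "d * twist_char n m c0 c mod (n * m) = twist_char n m (d * c0) (d * c)"
  by (simp add: twist_char_def mod_mult_right_eq algebra_simps)

lemma twist_char_dual_iff:
  assumes "0 < n" and "0 < m"
  shows "(z + n * m - twist_char n m c0 a) mod (n * m) = twist_char n m c0 b
    \<longleftrightarrow> [z = 2 * c0 + (a + b) * m] (mod n * m)"
proof -
  let ?N = "n * m" and ?f = "twist_char n m c0"
  have "(z + ?N - ?f a) mod ?N = ?f b \<longleftrightarrow> [z + ?N - ?f a = ?f b] (mod ?N)"
    using twist_char_less[OF assms] by (simp add: cong_def)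
  also have "\<dots> \<longleftrightarrow> [z + ?N = ?f b + ?f a] (mod ?N)"
    using twist_char_less[OF assms, of c0 a]
    by (simp add: cong_add_rcancel_nat[of "z + ?N - ?f a" "?f a", symmetric])
  also have "\<dots> \<longleftrightarrow> [z + ?N = (c0 + b * m) + (c0 + a * m)] (mod ?N)"
    using cong_add[OF cong_twist_char cong_twist_char]
    by (meson cong_sym cong_trans)
  also have "\<dots> \<longleftrightarrow> [z = 2 * c0 + (a + b) * m] (mod ?N)"
    by (simp add: cong_def algebra_simps mult_2_right)
  finally show ?thesis .
qed

lemma sum_list_twist_char_cong:
  "[sum_list (map (twist_char n m c0) cs) = length cs * c0 + sum_list cs * m] (mod n * m)"
proof (induction cs)
  case Nil
  show ?case by simp
next
  case (Cons c cs)
  then show ?case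
    using cong_add[OF cong_twist_char[of n m c0 c] Cons.IH] by (simp add: algebra_simps)
qed

lemma Lam_map_twist_char_eq_0_iff:
  "Lam (n * m) (map (twist_char n m c0) cs) = 0
    \<longleftrightarrow> [length cs * c0 + sum_list cs * m = 0] (mod n * m)"
  using sum_list_twist_char_cong[of n m c0 cs] by (simp add: Lam_def cong_def)

lemma dualizing_map_twist_char_iff:
  assumes "0 < n" and "0 < m" and "valid_tuple n cs" and "e < n" and "z < n * m"
    and "[z = 2 * c0 + e * m] (mod n * m)"
  shows "dualizing (n * m) (map (twist_char n m c0) cs) z \<longleftrightarrow> dualizing n cs e"
proof -
  let ?f = "twist_char n m c0" and ?h = "\<lambda>c. (e + n - c) mod n"
  have reflect: "(z + n * m - ?f c) mod (n * m) = ?f (?h c)" if "c < n" for c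
  proof -
    have "[c + ?h c = e] (mod n)"
      using that \<open>e < n\<close> by (simp add: cong_def mod_add_right_eq)
    then have "[2 * c0 + (c + ?h c) * m = 2 * c0 + e * m] (mod n * m)"
      using \<open>0 < m\<close> by (simp add: cong_add_lcancel_nat cong_mult_right_modulus_iff)
    then have "[z = 2 * c0 + (c + ?h c) * m] (mod n * m)"
      using assms(6) by (metis cong_sym cong_trans)
    then show ?thesis
      by (simp add: twist_char_dual_iff[OF assms(1,2)])
  qed
  have cs_less: "set_mset (mset cs) \<subseteq> {..<n}"
    using assms(3) by (auto simp: valid_tuple_def)
  have inj: "inj_on ?f (set_mset (image_mset ?h (mset cs)) \<union> set_mset (mset cs))"
    using cs_less \<open>0 < n\<close> by (auto intro: inj_on_subset[OF inj_on_twist_char[OF \<open>0 < m\<close>]])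
  have "image_mset (\<lambda>y. (z + n * m - y) mod (n * m)) (mset (map ?f cs))
      = image_mset ?f (image_mset ?h (mset cs))"
    using cs_less by (auto simp: image_mset.compositionality intro!: image_mset_cong reflect)
  then have "dualizing (n * m) (map ?f cs) z
      \<longleftrightarrow> image_mset ?f (image_mset ?h (mset cs)) = image_mset ?f (mset cs)"
    using assms(5) by (simp add: dualizing_def)
  also have "\<dots> \<longleftrightarrow> image_mset ?h (mset cs) = mset cs"
    using image_mset_inj_on_eqD[OF _ inj] by auto
  also have "\<dots> \<longleftrightarrow> dualizing n cs e"
    using \<open>e < n\<close> by (simp add: dualizing_def)
  finally show ?thesis .
qed

lemma self_dual_map_twist_charD:
  assumes "0 < n" and "0 < m" and "valid_tuple n cs" and "cs \<noteq> []"
    and "self_dual (n * m) (map (twist_char n m c0) cs)"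
  shows "self_dual n cs"
proof -
  let ?f = "twist_char n m c0" and ?c1 = "hd cs"
  obtain z where z: "dualizing (n * m) (map ?f cs) z"
    using assms(5) by (auto simp: self_dual_def)
  have z_less: "z < n * m"
    and stable: "image_mset (\<lambda>y. (z + n * m - y) mod (n * m)) (mset (map ?f cs)) = mset (map ?f cs)"
    using z unfolding dualizing_def by simp_all
  have "(z + n * m - ?f ?c1) mod (n * m)
      \<in># image_mset (\<lambda>y. (z + n * m - y) mod (n * m)) (mset (map ?f cs))"
    using \<open>cs \<noteq> []\<close> by simp
  then have "(z + n * m - ?f ?c1) mod (n * m) \<in># mset (map ?f cs)"
    by (simp only: stable)
  then obtain c2 where "(z + n * m - ?f ?c1) mod (n * m) = ?f c2"
    by auto
  then have "[z = 2 * c0 + (?c1 + c2) * m] (mod n * m)"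
    by (simp add: twist_char_dual_iff[OF assms(1,2)])
  moreover have "[(?c1 + c2) * m = ((?c1 + c2) mod n) * m] (mod n * m)"
    using \<open>0 < m\<close> by (simp add: cong_mult_right_modulus_iff cong_def)
  ultimately have "[z = 2 * c0 + ((?c1 + c2) mod n) * m] (mod n * m)"
    by (metis cong_add_lcancel_nat cong_trans)
  then have "dualizing n cs ((?c1 + c2) mod n)"
    using dualizing_map_twist_char_iff[OF assms(1-3) mod_less_divisor[OF \<open>0 < n\<close>] z_less] z
    by blast
  then show ?thesis
    by (auto simp: self_dual_def)
qed

lemma card_kummer_fibre_eq:
  fixes d N :: nat
  assumes "0 < d" and "d dvd length cs" and "length xis = length cs div d"
    and "mset cs = sum_list (map (\<lambda>xi. mset_set {x. x < N \<and> d * x mod N = xi}) xis)"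
    and "xi \<in> set xis"
  shows "card {x. x < N \<and> d * x mod N = xi} = d"
proof -
  let ?card = "\<lambda>xi. card {x. x < N \<and> d * x mod N = xi}"
  have "length cs = size (mset cs)"
    by simp
  also have "\<dots> = sum_list (map ?card xis)"
    unfolding assms(4) size_sum_list_mset by (simp add: comp_def)
  finally have "sum_list (map ?card xis) = length xis * d"
    using assms(2,3) by simp
  then show ?thesis
    by (rule sum_list_map_eq_bound_imp_eq[OF card_mult_mod_eq_le[OF \<open>0 < d\<close>] _ assms(5)])
qed

lemma mult_fibre_eq_image_twist_char:
  assumes "0 < n" and "0 < m"
    and "{y. y < n * m \<and> d * y mod (n * m) = r} \<noteq> {}"
    and "{y. y < n * m \<and> d * y mod (n * m) = r} \<subseteq> twist_char n m c0 ` {..<n}"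
  shows "\<exists>e<n. {y. y < n * m \<and> d * y mod (n * m) = r}
    = twist_char n m c0 ` {x. x < n \<and> d * x mod n = e}"
proof -
  let ?f = "twist_char n m c0"
  obtain c where "c < n" and r: "d * ?f c mod (n * m) = r"
    using assms(3,4) by blast
  have "{y. y < n * m \<and> d * y mod (n * m) = r} = ?f ` {x. x < n \<and> d * x mod n = d * c mod n}"
  proof (intro equalityI subsetI)
    fix y
    assume y: "y \<in> {y. y < n * m \<and> d * y mod (n * m) = r}"
    then obtain x where "x < n" "y = ?f x"
      using assms(4) by auto
    then show "y \<in> ?f ` {x. x < n \<and> d * x mod n = d * c mod n}"
      using y r by (auto simp: mult_twist_char_mod twist_char_eq_iff[OF \<open>0 < m\<close>] cong_def)
  next
    fix y
    assume "y \<in> ?f ` {x. x < n \<and> d * x mod n = d * c mod n}"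
    then obtain x where "d * x mod n = d * c mod n" "y = ?f x"
      by auto
    then show "y \<in> {y. y < n * m \<and> d * y mod (n * m) = r}"
      using r[symmetric] twist_char_less[OF assms(1,2)]
      by (simp add: mult_twist_char_mod twist_char_eq_iff[OF \<open>0 < m\<close>] cong_def)
  qed
  then show ?thesis
    using mod_less_divisor[OF \<open>0 < n\<close>] by blast
qed

lemma kummer_induced_map_twist_charD:
  assumes "0 < n" and "0 < m" and "valid_tuple n cs" and "cs \<noteq> []"
    and "kummer_induced (n * m) (map (twist_char n m c0) cs)"
  shows "kummer_induced n cs"
proof -
  let ?f = "twist_char n m c0"
  obtain d xis where d: "d dvd length cs" "d \<noteq> 1" and xis: "length xis = length cs div d"
    and decomp: "mset (map ?f cs)
      = sum_list (map (\<lambda>xi. mset_set {y. y < n * m \<and> d * y mod (n * m) = xi}) xis)"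
    using assms(5) by (auto simp: kummer_induced_def)
  define R where "R N r = {x. x < N \<and> d * x mod N = r}" for N r
  have "0 < d"
    using d(1) \<open>cs \<noteq> []\<close> by (auto intro: Nat.gr0I)
  have cs_less: "set cs \<subseteq> {..<n}"
    using assms(3) by (auto simp: valid_tuple_def)
  have "\<exists>e<n. R (n * m) xi = ?f ` R n e" if "xi \<in> set xis" for xi
  proof -
    have "card (R (n * m) xi) = d"
      unfolding R_def using card_kummer_fibre_eq[OF \<open>0 < d\<close> _ _ decomp that] d xis by simp
    then have "R (n * m) xi \<noteq> {}"
      using \<open>0 < d\<close> by auto
    moreover have "R (n * m) xi \<subseteq> ?f ` {..<n}"
      using arg_cong[OF decomp, of set_mset] that cs_less by (auto simp: R_def)
    ultimately show ?thesis
      unfolding R_def by (rule mult_fibre_eq_image_twist_char[OF assms(1,2)])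
  qed
  then obtain eta
    where eta: "\<And>xi. xi \<in> set xis \<Longrightarrow> eta xi < n \<and> R (n * m) xi = ?f ` R n (eta xi)"
    by metis
  let ?etas = "map eta xis"
  let ?M = "sum_list (map (\<lambda>e. mset_set (R n e)) ?etas)"
  have inj: "inj_on ?f {..<n}"
    using inj_on_twist_char[OF \<open>0 < m\<close>] .
  have "image_mset ?f (mset cs) = sum_list (map (\<lambda>xi. mset_set (?f ` R n (eta xi))) xis)"
    using decomp eta by (simp add: R_def cong: map_cong)
  also have "\<dots> = sum_list (map (\<lambda>xi. image_mset ?f (mset_set (R n (eta xi)))) xis)"
    by (intro arg_cong[where f = sum_list] map_cong refl)
      (simp add: image_mset_mset_set inj_on_subset[OF inj] R_def subset_eq)
  also have "\<dots> = image_mset ?f ?M"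
    by (simp add: image_mset_sum_list comp_def)
  finally have "image_mset ?f (mset cs) = image_mset ?f ?M" .
  moreover have "set_mset (mset cs) \<union> set_mset ?M \<subseteq> {..<n}"
    using cs_less by (auto simp: R_def)
  ultimately have "mset cs = ?M"
    using image_mset_inj_on_eqD inj_on_subset[OF inj] by blast
  moreover have "\<forall>e\<in>set ?etas. e < n"
    using eta by auto
  ultimately show ?thesis
    unfolding kummer_induced_def R_def using d xis
    by (intro exI[of _ d] exI[of _ ?etas]) simp
qed

lemma exists_power_gcd_dvd_cofactor:
  fixes q k :: nat
  assumes "prime_power q" and "0 < k"
  obtains \<nu> m where "1 \<le> \<nu>" and "q ^ \<nu> - 1 = (q - 1) * m" and "gcd k (q ^ \<nu> - 1) dvd m"
proof -
  obtain p e where p: "prime p" and "0 < e" and q: "q = p ^ e"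
    using assms(1) by (auto simp: prime_power_def)
  then have "2 \<le> q"
    using prime_ge_2_nat[OF p] self_le_power[of p e] by simp
  obtain K where K: "k = p ^ multiplicity p k * K" and "\<not> p dvd K"
    using multiplicity_decompose'[of k p] \<open>0 < k\<close> prime_ge_2_nat[OF p] by auto
  define \<nu> where "\<nu> = totient (K * (q - 1))"
  have "coprime q K"
    using \<open>\<not> p dvd K\<close> p q \<open>0 < e\<close> by (simp add: prime_imp_coprime)
  moreover have "coprime q (q - 1)"
    using \<open>2 \<le> q\<close> coprime_diff_one_right_nat[of q] by simp
  ultimately have "[q ^ \<nu> = 1] (mod K * (q - 1))"
    unfolding \<nu>_def by (intro euler_theorem) simp
  then obtain j where j: "q ^ \<nu> - 1 = (q - 1) * (K * j)"
    by (metis cong_to_1_nat dvd_def mult.assoc mult.commute)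
  have "0 < K"
    using K \<open>0 < k\<close> by (metis mult_0_right neq0_conv)
  then have "1 \<le> \<nu>"
    using \<open>2 \<le> q\<close> by (simp add: \<nu>_def Suc_le_eq)
  have "coprime (q ^ \<nu> - 1) (q ^ \<nu>)"
    by (rule coprime_diff_one_left_nat) (use \<open>2 \<le> q\<close> in simp)
  then have "coprime (gcd k (q ^ \<nu> - 1)) (p ^ multiplicity p k)"
    using \<open>1 \<le> \<nu>\<close> \<open>0 < e\<close> q
    by (auto intro: coprime_divisors[OF gcd_dvd2] simp: dvd_power)
  then have "gcd k (q ^ \<nu> - 1) dvd K"
    by (metis K coprime_dvd_mult_right_iff gcd_dvd1)
  then show ?thesis
    using that[OF \<open>1 \<le> \<nu>\<close> j] by simp
qed

lemma CGM_map_twist_char_if_not_self_dual: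
  assumes "0 < n" and "0 < m" and "valid_tuple n cs" and "cs \<noteq> []"
    and "\<not> kummer_induced n cs" and "odd (length cs) \<or> \<not> self_dual n cs"
    and "gcd (length cs) (n * m) dvd m"
  shows "\<exists>c0 < n * m. CGM (n * m) (map (twist_char n m c0) cs)"
proof -
  have "gcd (length cs) (n * m) dvd sum_list cs * m"
    using assms(7) by simp
  then obtain c0 where "c0 < n * m" and "[length cs * c0 + sum_list cs * m = 0] (mod n * m)"
    using exists_linear_cong_solution \<open>0 < n\<close> \<open>0 < m\<close> by (metis nat_0_less_mult_iff)
  then have "Lam (n * m) (map (twist_char n m c0) cs) = 0"
    by (simp add: Lam_map_twist_char_eq_0_iff)
  then show ?thesis
    using \<open>c0 < n * m\<close> assms(6) kummer_induced_map_twist_charD[OF assms(1-4)] assms(5)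
      self_dual_map_twist_charD[OF assms(1-4)]
    by (auto simp: CGM_def)
qed

lemma CGM_map_twist_char_if_alternating:
  assumes "0 < n" and "0 < m" and "valid_tuple n cs" and "cs \<noteq> []"
    and "\<not> kummer_induced n cs" and "alternating_wrt n cs xi"
    and "gcd 2 (n * m) dvd m"
  shows "\<exists>c0 < n * m. CGM (n * m) (map (twist_char n m c0) cs)"
proof -
  define h where "h = length cs div 2"
  have xi: "dualizing n cs xi" and even: "length cs = 2 * h"
    and sum: "[sum_list cs = h * xi] (mod n)"
    using assms(6) by (auto simp: alternating_wrt_def h_def Lam_def cong_def)
  have "gcd 2 (n * m) dvd xi * m"
    using assms(7) by simp
  then obtain c0 where "c0 < n * m" and dual: "[2 * c0 + xi * m = 0] (mod n * m)"
    using exists_linear_cong_solution \<open>0 < n\<close> \<open>0 < m\<close> by (metis nat_0_less_mult_iff)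
  have "xi < n"
    using xi by (simp add: dualizing_def)
  then have "dualizing (n * m) (map (twist_char n m c0) cs) 0"
    using dualizing_map_twist_char_iff[OF assms(1-3) \<open>xi < n\<close> _ cong_sym[OF dual]] xi
      \<open>0 < n\<close> \<open>0 < m\<close>
    by simp
  moreover have "[length cs * c0 + sum_list cs * m = 0] (mod n * m)"
  proof -
    have "[sum_list cs * m = h * xi * m] (mod n * m)"
      using sum by (rule cong_cmult_rightI)
    then have "[sum_list cs * m + length cs * c0 = h * xi * m + length cs * c0] (mod n * m)"
      by (rule cong_add[OF _ cong_refl])
    then have "[length cs * c0 + sum_list cs * m = h * (2 * c0 + xi * m)] (mod n * m)"
      unfolding even by (simp add: algebra_simps)
    also have "[h * (2 * c0 + xi * m) = h * 0] (mod n * m)"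
      using dual by (rule cong_scalar_left)
    finally show ?thesis
      by simp
  qed
  then have "Lam (n * m) (map (twist_char n m c0) cs) = 0"
    by (simp add: Lam_map_twist_char_eq_0_iff)
  ultimately show ?thesis
    using \<open>c0 < n * m\<close> even kummer_induced_map_twist_charD[OF assms(1-4)] assms(5)
    by (auto simp: CGM_def alternating_wrt_def)
qed

lemma CGM_map_twist_char_if_NIO:
  assumes "0 < n" and "0 < m" and "valid_tuple n cs" and "cs \<noteq> []"
    and "NIO n cs" and "gcd (2 * length cs) (n * m) dvd m"
  shows "\<exists>c0 < n * m. CGM (n * m) (map (twist_char n m c0) cs)"
proof (cases "odd (length cs) \<or> \<not> self_dual n cs")
  case True
  have "gcd (length cs) (n * m) dvd gcd (2 * length cs) (n * m)"
    by (simp add: gcd_mono)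
  then show ?thesis
    using CGM_map_twist_char_if_not_self_dual[OF assms(1-4) _ True] assms(5,6)
    by (meson NIO_def dvd_trans)
next
  case False
  then obtain xi where "alternating_wrt n cs xi"
    using assms(5) by (auto simp: NIO_def self_dual_def self_dual_symmetric_def alternating_wrt_def)
  moreover have "gcd 2 (n * m) dvd gcd (2 * length cs) (n * m)"
    by (simp add: gcd_mono)
  ultimately show ?thesis
    using CGM_map_twist_char_if_alternating[OF assms(1-4)] assms(5,6)
    by (meson NIO_def dvd_trans)
qed

theorem lemma6p3:
  fixes q :: nat and cs :: "nat list"
  assumes "prime_power q"
    and "length cs \<ge> 2"
    and "valid_tuple (q - 1) cs"
    and "NIO (q - 1) cs"
  shows "\<exists>\<nu> c0. \<nu> \<ge> 1 \<and> c0 < q ^ \<nu> - 1 \<and> CGM (q ^ \<nu> - 1) (twist_lift q \<nu> c0 cs)"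
proof -
  have "1 < q"
    using assms(1) unfolding prime_power_def by (metis prime_gt_1_nat one_less_power)
  have "0 < 2 * length cs" and "cs \<noteq> []"
    using assms(2) by auto
  obtain \<nu> m where "1 \<le> \<nu>" and N: "q ^ \<nu> - 1 = (q - 1) * m"
    and gcd: "gcd (2 * length cs) (q ^ \<nu> - 1) dvd m"
    by (rule exists_power_gcd_dvd_cofactor[OF assms(1) \<open>0 < 2 * length cs\<close>])
  have "1 < q ^ \<nu>"
    using one_less_power[OF \<open>1 < q\<close>] \<open>1 \<le> \<nu>\<close> by simp
  then have "0 < m"
    using N by (cases m) simp_all
  have "0 < q - 1"
    using \<open>1 < q\<close> by simp
  obtain c0 where "c0 < (q - 1) * m" and "CGM ((q - 1) * m) (map (twist_char (q - 1) m c0) cs)"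
    using CGM_map_twist_char_if_NIO[OF \<open>0 < q - 1\<close> \<open>0 < m\<close> assms(3) \<open>cs \<noteq> []\<close> assms(4)] gcd
    unfolding N by blast
  then have "c0 < q ^ \<nu> - 1 \<and> CGM (q ^ \<nu> - 1) (twist_lift q \<nu> c0 cs)"
    unfolding twist_lift_eq_map_twist_char[OF \<open>1 < q\<close> N] N by blast
  then show ?thesis
    using \<open>1 \<le> \<nu>\<close> by blast
qed

end
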